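(* Let $(\tilde\Theta^n_I)$ be a congruent family of covariant $n$-tensor fields on $\mathcal M_+(I)$, $I$ ranging over finite sets, and for a partition $\mathbf P$ of $\{1,\dots,n\}$, a finite set $I$ with $|I|\ge|\mathbf P|$ and $\lambda>0$ let $\theta^{\mathbf P}_{I,\lambda c_I}:=(\tilde\Theta^n_I)_{\lambda c_I}(\delta_{i_1},\dots,\delta_{i_n})$ for any multiindex $\vec i\in I^n$ with $\mathbf P(\vec i)=\mathbf P$ (this does not depend on the choice of $\vec i$). Suppose $\mathbf P_0$ is a partition of $\{1,\dots,n\}$ such that $\theta^{\mathbf P}_{I,\lambda c_I}=0$ for all partitions $\mathbf P<\mathbf P_0$, all $\lambda>0$ and all finite $I$ (for which it is defined). Then there is a continuous function $f_{\mathbf P_0}:(0,\infty)\to\mathbb R$ such that $\theta^{\mathbf P_0}_{I,\lambda c_I}=f_{\mathbf P_0}(\lambda)\,|I|^{n-|\mathbf P_0|}$ for all $\lambda>0$ and all finite sets $I$ with $|I|\ge|\mathbf P_0|$.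
   Context: For a finite set $I$: $\mathcal S(I)=\{\sum_{i\in I}x_i\delta_i:x_i\in\mathbb R\}$, $\mathcal M_+(I)=\{\sum\mu_i\delta_i:\mu_i>0\}$ (tangent space $\mathcal S(I)$), $c_I:=\frac1{|I|}\sum_{i\in I}\delta_i$. A covariant $n$-tensor field on $\mathcal M_+(I)$ is a continuously varying family of $n$-multilinear forms on $\mathcal S(I)$. A Markov kernel $K:I\to\mathcal P(I')$ between finite sets is a stochastic matrix $K(i)=\sum_{i'}K^i_{i'}\delta_{i'}$ with $K_*(\sum x_i\delta_i)=\sum_{i,i'}K^i_{i'}x_i\delta_{i'}$; it is congruent if there is a map $\kappa:I'\to I$ with $K^i_{i'}=0$ whenever $\kappa(i')\ne i$. The family is congruent if $(\tilde\Theta^n_{I'})_{K_*\mu}(K_*V_1,\dots,K_*V_n)=(\tilde\Theta^n_I)_\mu(V_1,\dots,V_n)$ for every congruent Markov kernel $K:I\to\mathcal P(I')$ between finite sets with $K_*(\mathcal M_+(I))\subset\mathcal M_+(I')$. For $\vec i\in I^n$, $\mathbf P(\vec i)$ is the partition of $\{1,\dots,n\}$ into classes of $k\sim l\iff i_k=i_l$. $|\mathbf P|$ is the number of blocks. Partitions are ordered by $\mathbf P\le\mathbf P'$ iff $\mathbf P$ is a subdivision (refinement) of $\mathbf P'$; $\mathbf P<\mathbf P'$ means $\mathbf P\le\mathbf P'$ and $\mathbf P\ne\mathbf P'$. *)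

theory Defs
  imports "HOL-Analysis.Analysis" "HOL-Library.Disjoint_Sets"
begin

text \<open>Finite sets I are modelled as finite nonempty subsets of nat.
  Measures / signed measures on I are functions nat \<Rightarrow> real vanishing outside I.
  Tensor arguments are lists of length n; argument positions are 0..<n.\<close>

definition SI :: "nat set \<Rightarrow> (nat \<Rightarrow> real) set" where
  "SI I = {x. \<forall>i. i \<notin> I \<longrightarrow> x i = 0}"

definition MP :: "nat set \<Rightarrow> (nat \<Rightarrow> real) set" where
  "MP I = {\<mu>. (\<forall>i\<in>I. \<mu> i > 0) \<and> (\<forall>i. i \<notin> I \<longrightarrow> \<mu> i = 0)}"

definition delta :: "nat \<Rightarrow> nat \<Rightarrow> real" where
  "delta i = (\<lambda>j. if j = i then 1 else 0)"

definition cI :: "nat set \<Rightarrow> nat \<Rightarrow> real" where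
  "cI I = (\<lambda>j. if j \<in> I then 1 / real (card I) else 0)"

definition tensor_field :: "nat \<Rightarrow> nat set \<Rightarrow> ((nat \<Rightarrow> real) \<Rightarrow> (nat \<Rightarrow> real) list \<Rightarrow> real) \<Rightarrow> bool" where
  "tensor_field n I T \<longleftrightarrow>
     (\<forall>\<mu>\<in>MP I. \<forall>Vs. length Vs = n \<and> set Vs \<subseteq> SI I \<longrightarrow>
        (\<forall>k<n. \<forall>x\<in>SI I. \<forall>y\<in>SI I. \<forall>a b::real.
           T \<mu> (Vs[k := (\<lambda>j. a * x j + b * y j)]) = a * T \<mu> (Vs[k := x]) + b * T \<mu> (Vs[k := y])))
   \<and> (\<forall>Vs. length Vs = n \<and> set Vs \<subseteq> SI I \<longrightarrow> continuous_on (MP I) (\<lambda>\<mu>. T \<mu> Vs))"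

definition congruent_markov :: "nat set \<Rightarrow> nat set \<Rightarrow> (nat \<Rightarrow> nat \<Rightarrow> real) \<Rightarrow> bool" where
  "congruent_markov I I' K \<longleftrightarrow>
     (\<forall>i\<in>I. \<forall>i'\<in>I'. K i i' \<ge> 0) \<and> (\<forall>i\<in>I. (\<Sum>i'\<in>I'. K i i') = 1) \<and>
     (\<exists>\<kappa>. \<kappa> ` I' \<subseteq> I \<and> (\<forall>i\<in>I. \<forall>i'\<in>I'. \<kappa> i' \<noteq> i \<longrightarrow> K i i' = 0))"

definition push :: "nat set \<Rightarrow> nat set \<Rightarrow> (nat \<Rightarrow> nat \<Rightarrow> real) \<Rightarrow> (nat \<Rightarrow> real) \<Rightarrow> nat \<Rightarrow> real" where
  "push I I' K x = (\<lambda>i'. if i' \<in> I' then (\<Sum>i\<in>I. K i i' * x i) else 0)"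

definition congruent_family :: "nat \<Rightarrow> (nat set \<Rightarrow> (nat \<Rightarrow> real) \<Rightarrow> (nat \<Rightarrow> real) list \<Rightarrow> real) \<Rightarrow> bool" where
  "congruent_family n \<Theta> \<longleftrightarrow>
     (\<forall>I. finite I \<and> I \<noteq> {} \<longrightarrow> tensor_field n I (\<Theta> I)) \<and>
     (\<forall>I I' K. finite I \<and> I \<noteq> {} \<and> finite I' \<and> I' \<noteq> {} \<and> congruent_markov I I' K \<and>
        push I I' K ` MP I \<subseteq> MP I' \<longrightarrow>
        (\<forall>\<mu>\<in>MP I. \<forall>Vs. length Vs = n \<and> set Vs \<subseteq> SI I \<longrightarrow>
           \<Theta> I' (push I I' K \<mu>) (map (push I I' K) Vs) = \<Theta> I \<mu> Vs))"

definition idx_partition :: "nat \<Rightarrow> nat list \<Rightarrow> nat set set" where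
  "idx_partition n is = (\<lambda>k. {l. l < n \<and> is ! l = is ! k}) ` {0..<n}"

definition refines :: "'a set set \<Rightarrow> 'a set set \<Rightarrow> bool" where
  "refines P P' \<longleftrightarrow> (\<forall>B\<in>P. \<exists>B'\<in>P'. B \<subseteq> B')"

definition theta :: "nat \<Rightarrow> (nat set \<Rightarrow> (nat \<Rightarrow> real) \<Rightarrow> (nat \<Rightarrow> real) list \<Rightarrow> real)
      \<Rightarrow> nat set set \<Rightarrow> nat set \<Rightarrow> real \<Rightarrow> real" where
  "theta n \<Theta> P I lam = \<Theta> I (\<lambda>j. lam * cI I j)
      (map delta (SOME is. length is = n \<and> set is \<subseteq> I \<and> idx_partition n is = P))"

end

theory Submission
  imports Defs
begin

(* Let kappa : J -> I have all fibres of size k, and let K spread each point of I uniformly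
   over its fibre. K is a congruent Markov kernel mapping lambda c_I to lambda c_J and delta_i
   to the average of the delta_j over the fibre of i. By congruence and multilinearity,
   theta^P0_I(lambda) is k^-n times the sum of Theta_J(delta_j1, ..., delta_jn) over all
   multiindices with j_l in the fibre of i_l. The partition of each such multiindex refines P0,
   so by hypothesis only the k^|P0| multiindices of pattern exactly P0 contribute, and
   theta^P0_J = k^(n-|P0|) theta^P0_I. For k = 1 this shows that theta^P depends on I only
   through |I|; comparing sets of sizes c*m and m*c for a fixed m >= |P0| yields
   f(lambda) = theta^P0_m(lambda) / m^(n-|P0|), continuous because Theta is. *)

section \<open>Index partitions\<close>

lemma idx_partition_eq_iff:
  "idx_partition n is = idx_partition n js \<longleftrightarrow> (\<forall>a<n. \<forall>b<n. is!a = is!b \<longleftrightarrow> js!a = js!b)"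
proof
  assume eq: "idx_partition n is = idx_partition n js"
  show "\<forall>a<n. \<forall>b<n. is!a = is!b \<longleftrightarrow> js!a = js!b"
  proof (intro allI impI)
    fix a b assume a: "a < n" and b: "b < n"
    have "{l. l < n \<and> is ! l = is ! a} \<in> idx_partition n is"
      using a unfolding idx_partition_def by auto
    then obtain c where ceq: "{l. l < n \<and> is ! l = is ! a} = {l. l < n \<and> js ! l = js ! c}"
      using eq unfolding idx_partition_def by auto
    have "js ! a = js ! c" using ceq a by blast
    then have same: "{l. l < n \<and> is ! l = is ! a} = {l. l < n \<and> js ! l = js ! a}"
      using ceq by simp
    have "b \<in> {l. l < n \<and> is ! l = is ! a} \<longleftrightarrow> b \<in> {l. l < n \<and> js ! l = js ! a}"
      by (simp only: same)
    then show "is!a = is!b \<longleftrightarrow> js!a = js!b" using b by auto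
  qed
next
  assume eqv: "\<forall>a<n. \<forall>b<n. is!a = is!b \<longleftrightarrow> js!a = js!b"
  show "idx_partition n is = idx_partition n js"
    unfolding idx_partition_def
  proof (rule image_cong[OF refl])
    fix k assume "k \<in> {0..<n}"
    then show "{l. l < n \<and> is ! l = is ! k} = {l. l < n \<and> js ! l = js ! k}" using eqv by auto
  qed
qed

lemma idx_partition_map_inj:
  assumes "length is = n" "inj_on c (set is)"
  shows "idx_partition n (map c is) = idx_partition n is"
  unfolding idx_partition_eq_iff
proof (intro allI impI)
  fix a b assume "a < n" "b < n"
  with assms show "map c is ! a = map c is ! b \<longleftrightarrow> is ! a = is ! b"
    by (simp add: inj_on_eq_iff)
qed

lemma card_idx_partition:
  assumes "length is = n"
  shows "card (idx_partition n is) = card (set is)"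
proof -
  have "set is = (!) is ` {0..<n}"
    by (metis assms atLeastLessThan_upt list.set_map map_nth)
  then have "idx_partition n is = (\<lambda>v. {l. l < n \<and> is ! l = v}) ` set is"
    unfolding idx_partition_def by (simp add: image_image)
  moreover have "inj_on (\<lambda>v. {l. l < n \<and> is ! l = v}) (set is)"
  proof (rule inj_onI)
    fix x y assume "x \<in> set is" and eq: "{l. l < n \<and> is ! l = x} = {l. l < n \<and> is ! l = y}"
    then obtain l where "l < n" "is ! l = x" using assms by (auto simp: in_set_conv_nth)
    then show "x = y" using eq by blast
  qed
  ultimately show ?thesis by (simp add: card_image)
qed

lemma partition_on_idx_partition: "partition_on {0..<n} (idx_partition n is)"
proof (rule partition_onI)
  show "\<Union> (idx_partition n is) = {0..<n}" unfolding idx_partition_def by auto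
next
  fix p q assume "p \<in> idx_partition n is" "q \<in> idx_partition n is" "p \<noteq> q"
  then show "disjnt p q" unfolding idx_partition_def disjnt_def by auto
next
  show "{} \<notin> idx_partition n is" unfolding idx_partition_def by auto
qed

lemma refines_idx_partition:
  assumes "\<And>l. l < n \<Longrightarrow> \<kappa> (js!l) = is!l"
  shows "refines (idx_partition n js) (idx_partition n is)"
  unfolding refines_def
proof
  fix B assume "B \<in> idx_partition n js"
  then obtain k where k: "k < n" and B: "B = {l. l < n \<and> js ! l = js ! k}"
    unfolding idx_partition_def by auto
  have "B \<subseteq> {l. l < n \<and> is ! l = is ! k}"
    unfolding B using k assms by (metis (mono_tags, lifting) Collect_mono)
  moreover have "{l. l < n \<and> is ! l = is ! k} \<in> idx_partition n is"
    unfolding idx_partition_def using k by auto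
  ultimately show "\<exists>B'\<in>idx_partition n is. B \<subseteq> B'" by blast
qed

lemma idx_partition_eq_obtains_bij:
  assumes len: "length is = n" "length js = n" and eq: "idx_partition n is = idx_partition n js"
  obtains h where "bij_betw h (set is) (set js)" "\<And>l. l < n \<Longrightarrow> h (is!l) = js!l"
proof
  have eqv: "\<forall>a<n. \<forall>b<n. is!a = is!b \<longleftrightarrow> js!a = js!b"
    using eq idx_partition_eq_iff by blast
  define h where "h v = js ! (SOME l. l < n \<and> is ! l = v)" for v
  show h: "h (is!l) = js!l" if "l < n" for l
  proof -
    have "\<exists>l'. l' < n \<and> is ! l' = is ! l" using that by blast
    then have "(SOME l'. l' < n \<and> is ! l' = is ! l) < n \<and> is ! (SOME l'. l' < n \<and> is ! l' = is ! l) = is ! l"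
      by (rule someI_ex)
    then show ?thesis unfolding h_def using eqv that by blast
  qed
  have set_is: "set is = (!) is ` {0..<n}" and set_js: "set js = (!) js ` {0..<n}"
    by (metis len atLeastLessThan_upt list.set_map map_nth)+
  show "bij_betw h (set is) (set js)"
    unfolding bij_betw_def
  proof
    show "inj_on h (set is)"
    proof (rule inj_onI)
      fix x y assume "x \<in> set is" "y \<in> set is" "h x = h y"
      then obtain a b where "a < n" "b < n" "x = is!a" "y = is!b" "js!a = js!b"
        unfolding set_is using h by auto
      then show "x = y" using eqv by simp
    qed
    have "h ` set is = (\<lambda>l. h (is!l)) ` {0..<n}" unfolding set_is by (simp add: image_image)
    also have "\<dots> = set js" unfolding set_js using h by (intro image_cong) auto
    finally show "h ` set is = set js" .
  qed
qed

lemma bij_betw_extend: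
  assumes h: "bij_betw h A B" and sub: "A \<subseteq> J" "B \<subseteq> I"
    and fin: "finite J" "finite I" and card: "card J = card I"
  obtains \<kappa> where "bij_betw \<kappa> J I" "\<And>x. x \<in> A \<Longrightarrow> \<kappa> x = h x"
proof -
  have "finite A" "finite B" using sub fin finite_subset by auto
  then have "card (J - A) = card (I - B)"
    using sub card bij_betw_same_card[OF h] by (simp add: card_Diff_subset)
  then obtain g where g: "bij_betw g (J - A) (I - B)"
    using fin by (meson finite_Diff finite_same_card_bij)
  define \<kappa> where "\<kappa> x = (if x \<in> A then h x else g x)" for x
  have "bij_betw \<kappa> (A \<union> (J - A)) (B \<union> (I - B))"
  proof (rule bij_betw_combine)
    show "bij_betw \<kappa> A B" using h by (rule bij_betw_cong[THEN iffD1, rotated]) (simp add: \<kappa>_def)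
    show "bij_betw \<kappa> (J - A) (I - B)" using g by (rule bij_betw_cong[THEN iffD1, rotated]) (simp add: \<kappa>_def)
  qed auto
  moreover have "A \<union> (J - A) = J" "B \<union> (I - B) = I" using sub by auto
  ultimately show thesis using that[of \<kappa>] unfolding \<kappa>_def by simp
qed

lemma ex_idx_partition:
  assumes P: "partition_on {0..<n} P" and I: "finite I" and card: "card P \<le> card I"
  shows "\<exists>is. length is = n \<and> set is \<subseteq> I \<and> idx_partition n is = P"
proof -
  obtain e where e: "e ` P \<subseteq> I" "inj_on e P"
    using card_le_inj[OF finite_elements[OF _ P] I card] by blast
  define blk where "blk l = (THE B. B \<in> P \<and> l \<in> B)" for l
  have blk_unique: "\<exists>!B. B \<in> P \<and> l \<in> B" if "l < n" for l
    using P that unfolding partition_on_def disjoint_def by auto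
  have blk: "blk l \<in> P \<and> l \<in> blk l" if "l < n" for l
    unfolding blk_def using blk_unique[OF that] by (rule theI')
  have blk_eq: "blk l = B" if "l < n" "B \<in> P" "l \<in> B" for l B
    using blk_unique[OF that(1)] blk[OF that(1)] that by blast
  define ixs where "ixs = map (\<lambda>l. e (blk l)) [0..<n]"
  have "idx_partition n ixs = (\<lambda>k. {l. l < n \<and> blk l = blk k}) ` {0..<n}"
    unfolding idx_partition_def ixs_def
    by (rule image_cong[OF refl]) (use e(2) blk in \<open>auto simp: inj_on_eq_iff\<close>)
  also have "\<dots> = blk ` {0..<n}"
  proof (rule image_cong[OF refl])
    fix k assume "k \<in> {0..<n}"
    then have k: "k < n" by simp
    have sub: "blk k \<subseteq> {0..<n}" using blk[OF k] partition_onD1[OF P] by auto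
    show "{l. l < n \<and> blk l = blk k} = blk k"
    proof
      show "{l. l < n \<and> blk l = blk k} \<subseteq> blk k" using blk by auto
      show "blk k \<subseteq> {l. l < n \<and> blk l = blk k}" using sub blk_eq blk[OF k] by auto
    qed
  qed
  also have "\<dots> = P"
  proof
    show "blk ` {0..<n} \<subseteq> P" using blk by auto
    show "P \<subseteq> blk ` {0..<n}"
    proof
      fix B assume B: "B \<in> P"
      then obtain l where "l \<in> B" using partition_onD3[OF P] by (metis ex_in_conv)
      moreover have "l < n" using B \<open>l \<in> B\<close> partition_onD1[OF P] by auto
      ultimately show "B \<in> blk ` {0..<n}" using blk_eq B by force
    qed
  qed
  finally have "idx_partition n ixs = P" .
  moreover have "length ixs = n" "set ixs \<subseteq> I" unfolding ixs_def using e blk by auto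
  ultimately show ?thesis by blast
qed

section \<open>Multilinear expansion\<close>

lemma delta_in_SI: "i \<in> I \<Longrightarrow> delta i \<in> SI I"
  unfolding SI_def delta_def by auto

lemma sum_in_SI: "(\<And>j. j \<in> F \<Longrightarrow> g j \<in> SI I) \<Longrightarrow> (\<lambda>x. \<Sum>j\<in>F. a j * g j x) \<in> SI I"
  unfolding SI_def by auto

lemma cI_in_MP: "finite I \<Longrightarrow> I \<noteq> {} \<Longrightarrow> (lam::real) > 0 \<Longrightarrow> (\<lambda>j. lam * cI I j) \<in> MP I"
  unfolding MP_def cI_def by (auto simp: card_gt_0_iff)

lemma tensor_field_sum_slot:
  assumes T: "tensor_field n I T" and \<mu>: "\<mu> \<in> MP I" and Vs: "length Vs = n" "set Vs \<subseteq> SI I"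
    and k: "k < n" and F: "finite F" and g: "\<And>j. j \<in> F \<Longrightarrow> g j \<in> SI I"
  shows "T \<mu> (Vs[k := (\<lambda>x. \<Sum>j\<in>F. a j * g j x)]) = (\<Sum>j\<in>F. a j * T \<mu> (Vs[k := g j]))"
proof -
  have lin: "T \<mu> (Vs[k := (\<lambda>j. u * x j + v * y j)]) = u * T \<mu> (Vs[k := x]) + v * T \<mu> (Vs[k := y])"
    if "x \<in> SI I" "y \<in> SI I" for x y u v
    using T \<mu> Vs k that unfolding tensor_field_def by blast
  show ?thesis
    using F g
  proof (induction F rule: finite_induct)
    case empty
    have "T \<mu> (Vs[k := (\<lambda>j. 0 * 0 + 0 * 0)]) = 0 * T \<mu> (Vs[k := (\<lambda>_. 0)]) + 0 * T \<mu> (Vs[k := (\<lambda>_. 0)])"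
      by (rule lin) (simp_all add: SI_def)
    then show ?case by simp
  next
    case (insert b F)
    have "(\<lambda>x. \<Sum>j\<in>insert b F. a j * g j x) = (\<lambda>x. a b * g b x + 1 * (\<Sum>j\<in>F. a j * g j x))"
      using insert by simp
    then show ?case
      using insert lin[of "g b" "\<lambda>x. \<Sum>j\<in>F. a j * g j x" "a b" 1] sum_in_SI[of F g I a] by simp
  qed
qed

lemma listset_conv_nth:
  "listset Fs = {js. length js = length Fs \<and> (\<forall>l<length Fs. js!l \<in> Fs!l)}"
proof (induction Fs)
  case Nil
  then show ?case by simp
next
  case (Cons F Fs)
  show ?case
  proof (rule set_eqI)
    fix js
    show "js \<in> listset (F # Fs) \<longleftrightarrow> js \<in> {js. length js = length (F # Fs) \<and> (\<forall>l<length (F # Fs). js!l \<in> (F # Fs)!l)}"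
      using Cons by (cases js) (auto simp: set_Cons_def nth_Cons split: nat.splits)
  qed
qed

lemma sum_set_Cons: "(\<Sum>xs\<in>set_Cons A XS. g xs) = (\<Sum>a\<in>A. \<Sum>xs\<in>XS. g (a # xs))"
proof -
  have "set_Cons A XS = (\<lambda>(a, xs). a # xs) ` (A \<times> XS)"
    unfolding set_Cons_def by auto
  then have "(\<Sum>xs\<in>set_Cons A XS. g xs) = (\<Sum>(a, xs)\<in>A \<times> XS. g (a # xs))"
    by (simp add: sum.reindex inj_on_def case_prod_beta)
  then show ?thesis by (simp add: sum.cartesian_product)
qed

lemma tensor_field_expand_sums:
  assumes T: "tensor_field n I T" and \<mu>: "\<mu> \<in> MP I"
    and "\<forall>F\<in>set Fs. F \<subseteq> I \<and> finite F" "set pre \<subseteq> SI I" "length pre + length Fs = n"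
  shows "T \<mu> (pre @ map (\<lambda>F x. \<Sum>j\<in>F. c * delta j x) Fs)
    = c ^ length Fs * (\<Sum>js\<in>listset Fs. T \<mu> (pre @ map delta js))"
  using assms(3-5)
  \<comment> \<open>the prefix \<open>pre\<close> of already expanded slots makes the statement inductive\<close>
proof (induction Fs arbitrary: pre)
  case Nil
  then show ?case by simp
next
  case (Cons F Fs)
  define S where "S G = (\<lambda>x. \<Sum>j\<in>G. c * delta j x)" for G
  have S_SI: "S G \<in> SI I" if "G \<subseteq> I" for G
    unfolding S_def using that by (intro sum_in_SI delta_in_SI) auto
  define Vs where "Vs = pre @ (\<lambda>_. 0) # map S Fs"
  have Vs: "length Vs = n" "set Vs \<subseteq> SI I"
    using Cons.prems S_SI unfolding Vs_def by (auto simp: SI_def)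
  have upd: "Vs[length pre := G] = pre @ G # map S Fs" for G
    unfolding Vs_def by simp
  have "T \<mu> (pre @ map S (F # Fs)) = T \<mu> (Vs[length pre := S F])"
    by (simp add: upd)
  also have "\<dots> = (\<Sum>j\<in>F. c * T \<mu> (Vs[length pre := delta j]))"
    unfolding S_def
    by (rule tensor_field_sum_slot[OF T \<mu> Vs]) (use Cons.prems in \<open>auto intro: delta_in_SI\<close>)
  also have "\<dots> = (\<Sum>j\<in>F. c * T \<mu> ((pre @ [delta j]) @ map S Fs))"
    by (simp add: upd)
  also have "\<dots> = (\<Sum>j\<in>F. c * (c ^ length Fs * (\<Sum>js\<in>listset Fs. T \<mu> ((pre @ [delta j]) @ map delta js))))"
    unfolding S_def using Cons.prems by (intro sum.cong refl arg_cong[where f = "(*) c"] Cons.IH)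
      (auto intro: delta_in_SI)
  also have "\<dots> = c ^ length (F # Fs) * (\<Sum>js\<in>listset (F # Fs). T \<mu> (pre @ map delta js))"
    by (simp add: sum_set_Cons sum_distrib_left mult.assoc)
  finally show ?case unfolding S_def .
qed

lemma push_outside: "j \<notin> I' \<Longrightarrow> push I I' K x j = 0"
  unfolding push_def by simp

lemma congruent_family_tensor_field:
  "congruent_family n \<Theta> \<Longrightarrow> finite I \<Longrightarrow> I \<noteq> {} \<Longrightarrow> tensor_field n I (\<Theta> I)"
  unfolding congruent_family_def by simp

lemma congruent_family_push:
  assumes "congruent_family n \<Theta>" "finite I" "I \<noteq> {}" "finite I'" "I' \<noteq> {}"
    "congruent_markov I I' K" "push I I' K ` MP I \<subseteq> MP I'"
    "\<mu> \<in> MP I" "length Vs = n" "set Vs \<subseteq> SI I"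
  shows "\<Theta> I' (push I I' K \<mu>) (map (push I I' K) Vs) = \<Theta> I \<mu> Vs"
proof -
  have "\<forall>I I' K. finite I \<and> I \<noteq> {} \<and> finite I' \<and> I' \<noteq> {} \<and> congruent_markov I I' K \<and>
      push I I' K ` MP I \<subseteq> MP I' \<longrightarrow>
      (\<forall>\<mu>\<in>MP I. \<forall>Vs. length Vs = n \<and> set Vs \<subseteq> SI I \<longrightarrow>
         \<Theta> I' (push I I' K \<mu>) (map (push I I' K) Vs) = \<Theta> I \<mu> Vs)"
    using assms(1) unfolding congruent_family_def by (rule conjunct2)
  then show ?thesis using assms(2-) by simp
qed

section \<open>Congruence along uniform fibrations\<close>

locale uniform_fibration =
  fixes I J :: "nat set" and \<kappa> :: "nat \<Rightarrow> nat" and k :: nat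
  assumes finite_I: "finite I" and I_ne: "I \<noteq> {}" and finite_J: "finite J"
    and maps_into: "\<kappa> ` J \<subseteq> I" and k_pos: "0 < k"
    and card_fibre: "\<And>i. i \<in> I \<Longrightarrow> card {j\<in>J. \<kappa> j = i} = k"
begin

definition fibre :: "nat \<Rightarrow> nat set" where
  "fibre i = {j\<in>J. \<kappa> j = i}"

definition fibre_kernel :: "nat \<Rightarrow> nat \<Rightarrow> real" where
  "fibre_kernel i j = (if \<kappa> j = i then 1 / real k else 0)"

lemma card_J: "card J = k * card I"
proof -
  have "J = (\<Union>i\<in>I. fibre i)" using maps_into unfolding fibre_def by auto
  also have "card (\<Union>i\<in>I. fibre i) = (\<Sum>i\<in>I. card (fibre i))"
    by (rule card_UN_disjoint) (use finite_I finite_J in \<open>auto simp: fibre_def\<close>)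
  also have "\<dots> = (\<Sum>i\<in>I. k)" using card_fibre by (simp add: fibre_def)
  finally show ?thesis by simp
qed

lemma J_ne: "J \<noteq> {}"
  using card_J k_pos finite_I I_ne by auto

lemma push_fibre_kernel:
  assumes "j \<in> J"
  shows "push I J fibre_kernel x j = x (\<kappa> j) / real k"
proof -
  have "push I J fibre_kernel x j = (\<Sum>i\<in>I. if i = \<kappa> j then x i / real k else 0)"
    unfolding push_def fibre_kernel_def using assms by (auto intro!: sum.cong)
  also have "\<dots> = x (\<kappa> j) / real k"
    using finite_I maps_into assms by (subst sum.delta) auto
  finally show ?thesis .
qed

lemma congruent_markov_fibre_kernel: "congruent_markov I J fibre_kernel"
proof -
  have "(\<Sum>j\<in>J. fibre_kernel i j) = 1" if "i \<in> I" for i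
  proof -
    have "(\<Sum>j\<in>J. fibre_kernel i j) = (\<Sum>j\<in>fibre i. 1 / real k)"
      unfolding fibre_kernel_def fibre_def by (rule sum.inter_filter[OF finite_J, symmetric])
    also have "\<dots> = 1" using card_fibre[OF that] k_pos by (simp add: fibre_def)
    finally show ?thesis .
  qed
  then show ?thesis
    unfolding congruent_markov_def using maps_into by (auto simp: fibre_kernel_def)
qed

lemma push_fibre_kernel_MP: "push I J fibre_kernel ` MP I \<subseteq> MP J"
  using maps_into k_pos by (auto simp: MP_def push_fibre_kernel push_outside)

lemma push_fibre_kernel_cI: "push I J fibre_kernel (\<lambda>j. lam * cI I j) = (\<lambda>j. lam * cI J j)"
  using maps_into k_pos by (auto simp: fun_eq_iff push_fibre_kernel push_outside cI_def card_J)

lemma push_fibre_kernel_delta: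
  "push I J fibre_kernel (delta i) = (\<lambda>x. \<Sum>j\<in>fibre i. 1 / real k * delta j x)"
proof
  fix x
  have "(\<Sum>j\<in>fibre i. 1 / real k * delta j x) = (\<Sum>j\<in>fibre i. if x = j then 1 / real k else 0)"
    unfolding delta_def by (intro sum.cong) auto
  also have "\<dots> = (if x \<in> fibre i then 1 / real k else 0)"
    using finite_J by (simp add: fibre_def)
  finally show "push I J fibre_kernel (delta i) x = (\<Sum>j\<in>fibre i. 1 / real k * delta j x)"
    by (cases "x \<in> J") (auto simp: push_fibre_kernel push_outside delta_def fibre_def)
qed

lemma congruent_family_expand_fibres:
  assumes cf: "congruent_family n \<Theta>" and lam: "lam > 0"
    and idx: "length is = n" "set is \<subseteq> I"
  shows "\<Theta> I (\<lambda>j. lam * cI I j) (map delta is)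
     = (1 / real k) ^ n * (\<Sum>js\<in>listset (map fibre is). \<Theta> J (\<lambda>j. lam * cI J j) (map delta js))"
proof -
  have "\<Theta> I (\<lambda>j. lam * cI I j) (map delta is)
      = \<Theta> J (push I J fibre_kernel (\<lambda>j. lam * cI I j)) (map (push I J fibre_kernel) (map delta is))"
    by (rule congruent_family_push[OF cf finite_I I_ne finite_J J_ne congruent_markov_fibre_kernel
        push_fibre_kernel_MP cI_in_MP[OF finite_I I_ne lam], symmetric])
      (use idx delta_in_SI in auto)
  also have "\<dots> = \<Theta> J (\<lambda>j. lam * cI J j) ([] @ map (\<lambda>F x. \<Sum>j\<in>F. 1 / real k * delta j x) (map fibre is))"
    unfolding push_fibre_kernel_cI map_map comp_def push_fibre_kernel_delta by simp
  also have "\<dots> = (1 / real k) ^ n * (\<Sum>js\<in>listset (map fibre is). \<Theta> J (\<lambda>j. lam * cI J j) (map delta js))"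
    using cf finite_J J_ne lam idx
    by (subst tensor_field_expand_sums[OF congruent_family_tensor_field])
      (auto simp: cI_in_MP fibre_def)
  finally show ?thesis .
qed

end

section \<open>The coefficients theta\<close>

lemma congruent_family_eq_if_same_pattern:
  assumes cf: "congruent_family n \<Theta>" and I: "finite I" "I \<noteq> {}"
    and J: "finite J" "card J = card I" and lam: "lam > 0"
    and len: "length is = n" "length js = n" and sub: "set is \<subseteq> I" "set js \<subseteq> J"
    and eq: "idx_partition n is = idx_partition n js"
  shows "\<Theta> I (\<lambda>j. lam * cI I j) (map delta is) = \<Theta> J (\<lambda>j. lam * cI J j) (map delta js)"
proof -
  obtain h where h: "bij_betw h (set js) (set is)" "\<And>l. l < n \<Longrightarrow> h (js!l) = is!l"
    using idx_partition_eq_obtains_bij[OF len(2,1) eq[symmetric]] by blast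
  obtain \<kappa> where bij: "bij_betw \<kappa> J I" and \<kappa>: "\<And>l. l < n \<Longrightarrow> \<kappa> (js!l) = is!l"
    using bij_betw_extend[OF h(1) sub(2,1) J(1) I(1) J(2)] h(2) len sub by (metis nth_mem subsetD)
  have single_fibre: "{j\<in>J. \<kappa> j = \<kappa> x} = {x}" if "x \<in> J" for x
    using bij that by (auto simp: bij_betw_def inj_on_eq_iff)
  interpret uniform_fibration I J \<kappa> 1
  proof
    show "card {j \<in> J. \<kappa> j = i} = 1" if "i \<in> I" for i
      using that bij single_fibre by (auto simp: bij_betw_def)
  qed (use I J bij in \<open>auto simp: bij_betw_def\<close>)
  have "listset (map fibre is) = {js}"
  proof -
    have "fibre (is!l) = {js!l}" if "l < n" for l
    proof -
      have "js!l \<in> J" using sub len that by auto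
      then have "{j\<in>J. \<kappa> j = \<kappa> (js!l)} = {js!l}" by (rule single_fibre)
      then show ?thesis unfolding fibre_def using \<kappa>[OF that] by simp
    qed
    then show ?thesis
      using len by (auto simp: listset_conv_nth intro: nth_equalityI)
  qed
  then show ?thesis
    using congruent_family_expand_fibres[OF cf lam len(1) sub(1)] by simp
qed

lemma theta_idx_partition:
  assumes cf: "congruent_family n \<Theta>" and I: "finite I" "I \<noteq> {}" and lam: "lam > 0"
    and len: "length is = n" and sub: "set is \<subseteq> I"
  shows "theta n \<Theta> (idx_partition n is) I lam = \<Theta> I (\<lambda>j. lam * cI I j) (map delta is)"
proof -
  define js where "js = (SOME js. length js = n \<and> set js \<subseteq> I \<and> idx_partition n js = idx_partition n is)"
  have "length js = n \<and> set js \<subseteq> I \<and> idx_partition n js = idx_partition n is"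
    unfolding js_def by (rule someI[of _ "is"]) (use len sub in simp)
  then have "\<Theta> I (\<lambda>j. lam * cI I j) (map delta js) = \<Theta> I (\<lambda>j. lam * cI I j) (map delta is)"
    using congruent_family_eq_if_same_pattern[OF cf I I(1) refl lam] len sub by metis
  then show ?thesis unfolding theta_def js_def .
qed

lemma theta_eq_if_card_eq:
  assumes cf: "congruent_family n \<Theta>" and P: "partition_on {0..<n} P"
    and I: "finite I" "I \<noteq> {}" and J: "finite J" "card J = card I"
    and card: "card P \<le> card I" and lam: "lam > 0"
  shows "theta n \<Theta> P J lam = theta n \<Theta> P I lam"
proof -
  obtain ixs where ixs: "length ixs = n" "set ixs \<subseteq> I" "idx_partition n ixs = P"
    using ex_idx_partition[OF P I(1) card] by blast
  obtain jxs where jxs: "length jxs = n" "set jxs \<subseteq> J" "idx_partition n jxs = P"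
    using ex_idx_partition[OF P J(1)] card J(2) by auto
  have "J \<noteq> {}" using I J by auto
  then show ?thesis
    using theta_idx_partition[OF cf I lam ixs(1,2)] theta_idx_partition[OF cf J(1) _ lam jxs(1,2)]
      congruent_family_eq_if_same_pattern[OF cf I J lam ixs(1) jxs(1) ixs(2) jxs(2)] ixs(3) jxs(3)
    by simp
qed

lemma theta_continuous_on:
  assumes cf: "congruent_family n \<Theta>" and P: "partition_on {0..<n} P"
    and I: "finite I" "I \<noteq> {}" and card: "card P \<le> card I"
  shows "continuous_on {0<..} (theta n \<Theta> P I)"
proof -
  define Vs where "Vs = map delta (SOME is. length is = n \<and> set is \<subseteq> I \<and> idx_partition n is = P)"
  have "length Vs = n \<and> set Vs \<subseteq> SI I"
    using someI_ex[OF ex_idx_partition[OF P I(1) card]] delta_in_SI unfolding Vs_def by auto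
  then have "continuous_on (MP I) (\<lambda>\<mu>. \<Theta> I \<mu> Vs)"
    using congruent_family_tensor_field[OF cf I] unfolding tensor_field_def by blast
  moreover have "continuous_on {0<..} (\<lambda>lam::real. (\<lambda>j. lam * cI I j))"
    by (intro continuous_on_coordinatewise_then_product continuous_intros)
  moreover have "(\<lambda>lam::real. (\<lambda>j. lam * cI I j)) ` {0<..} \<subseteq> MP I"
    using cI_in_MP I by auto
  ultimately have "continuous_on {0<..} (\<lambda>lam. \<Theta> I (\<lambda>j. lam * cI I j) Vs)"
    by (rule continuous_on_compose2)
  then show ?thesis unfolding theta_def Vs_def by (simp add: fun_eq_iff)
qed

lemma card_listset_same_pattern:
  assumes len: "length is = n" and card: "\<And>v. v \<in> set is \<Longrightarrow> card (F v) = k"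
    and disj: "disjoint_family_on F (set is)"
  shows "card {js \<in> listset (map F is). idx_partition n js = idx_partition n is} = k ^ card (set is)"
proof -
  let ?E = "\<Pi>\<^sub>E v\<in>set is. F v"
  have "{js \<in> listset (map F is). idx_partition n js = idx_partition n is} = (\<lambda>c. map c is) ` ?E"
  proof (intro equalityI subsetI)
    fix js assume "js \<in> {js \<in> listset (map F is). idx_partition n js = idx_partition n is}"
    then have js: "length js = n" "\<And>l. l < n \<Longrightarrow> js!l \<in> F (is!l)"
      and eq: "idx_partition n is = idx_partition n js"
      using len by (auto simp: listset_conv_nth)
    obtain h where h: "\<And>l. l < n \<Longrightarrow> h (is!l) = js!l"
      using idx_partition_eq_obtains_bij[OF len js(1) eq] by blast
    have "restrict h (set is) \<in> ?E"
      unfolding restrict_PiE_iff using h js len by (auto simp: in_set_conv_nth)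
    moreover have "js = map (restrict h (set is)) is"
      using h js len by (auto intro!: nth_equalityI)
    ultimately show "js \<in> (\<lambda>c. map c is) ` ?E" by blast
  next
    fix js assume "js \<in> (\<lambda>c. map c is) ` ?E"
    then obtain c where c: "c \<in> ?E" and js: "js = map c is" by blast
    have "inj_on c (set is)"
    proof (rule inj_onI)
      fix v w assume v: "v \<in> set is" and w: "w \<in> set is" and "c v = c w"
      then have "c v \<in> F v \<inter> F w" using c by (auto simp: PiE_iff)
      then show "v = w" using disj v w by (auto simp: disjoint_family_on_def)
    qed
    then show "js \<in> {js \<in> listset (map F is). idx_partition n js = idx_partition n is}"
      using c js len idx_partition_map_inj by (auto simp: listset_conv_nth PiE_iff)
  qed
  moreover have "inj_on (\<lambda>c. map c is) ?E"
    by (rule inj_onI) (auto intro: PiE_ext simp: map_eq_conv)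
  ultimately show ?thesis using card by (simp add: card_image card_PiE)
qed

definition lower_patterns_vanish ::
    "nat \<Rightarrow> (nat set \<Rightarrow> (nat \<Rightarrow> real) \<Rightarrow> (nat \<Rightarrow> real) list \<Rightarrow> real) \<Rightarrow> nat set set \<Rightarrow> bool" where
  "lower_patterns_vanish n \<Theta> P0 \<longleftrightarrow>
     (\<forall>P. partition_on {0..<n} P \<and> refines P P0 \<and> P \<noteq> P0 \<longrightarrow>
        (\<forall>lam>0. \<forall>I. finite I \<and> I \<noteq> {} \<and> card I \<ge> card P \<longrightarrow> theta n \<Theta> P I lam = 0))"

lemma congruent_family_refining_pattern:
  assumes cf: "congruent_family n \<Theta>" and van: "lower_patterns_vanish n \<Theta> P0"
    and J: "finite J" "J \<noteq> {}" and lam: "lam > 0"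
    and len: "length js = n" and sub: "set js \<subseteq> J" and ref: "refines (idx_partition n js) P0"
  shows "\<Theta> J (\<lambda>j. lam * cI J j) (map delta js)
    = (if idx_partition n js = P0 then theta n \<Theta> P0 J lam else 0)"
proof -
  have "card (idx_partition n js) \<le> card J"
    using card_idx_partition[OF len] card_mono[OF J(1) sub] by simp
  then have "idx_partition n js \<noteq> P0 \<Longrightarrow> theta n \<Theta> (idx_partition n js) J lam = 0"
    using van partition_on_idx_partition ref J lam unfolding lower_patterns_vanish_def by blast
  then show ?thesis using theta_idx_partition[OF cf J lam len sub] by auto
qed

lemma (in uniform_fibration) theta_fibration_scale:
  assumes cf: "congruent_family n \<Theta>" and P0: "partition_on {0..<n} P0"
    and van: "lower_patterns_vanish n \<Theta> P0" and card: "card P0 \<le> card I" and lam: "lam > 0"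
  shows "theta n \<Theta> P0 J lam = real k ^ (n - card P0) * theta n \<Theta> P0 I lam"
proof -
  obtain ixs where ixs: "length ixs = n" "set ixs \<subseteq> I" "idx_partition n ixs = P0"
    using ex_idx_partition[OF P0 finite_I card] by blast
  let ?L = "listset (map fibre ixs)"
  define T where "T = theta n \<Theta> P0 J lam"
  have L: "length js = n" "set js \<subseteq> J" "\<And>l. l < n \<Longrightarrow> \<kappa> (js!l) = ixs!l" if "js \<in> ?L" for js
    using that ixs(1) by (auto simp: listset_conv_nth fibre_def in_set_conv_nth)
  have "finite ?L"
    by (rule finite_subset[OF _ finite_lists_length_eq[OF finite_J, of n]]) (use L in blast)
  have "\<Theta> J (\<lambda>j. lam * cI J j) (map delta js) = (if idx_partition n js = P0 then T else 0)"
    if "js \<in> ?L" for js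
    using congruent_family_refining_pattern[OF cf van finite_J J_ne lam L(1,2)[OF that]]
      refines_idx_partition[of n \<kappa> js ixs, OF L(3)[OF that]] ixs(3) unfolding T_def by simp
  then have "(\<Sum>js\<in>?L. \<Theta> J (\<lambda>j. lam * cI J j) (map delta js))
      = (\<Sum>js\<in>?L. if idx_partition n js = P0 then T else 0)"
    by (rule sum.cong[OF refl])
  also have "\<dots> = real (card {js \<in> ?L. idx_partition n js = P0}) * T"
    using sum.inter_filter[OF \<open>finite ?L\<close>, of "\<lambda>_. T"] by simp
  also have "card {js \<in> ?L. idx_partition n js = P0} = k ^ card P0"
    using card_listset_same_pattern[OF ixs(1), of fibre k] ixs card_fibre card_idx_partition[OF ixs(1)]
    by (auto simp: disjoint_family_on_def fibre_def)
  finally have "theta n \<Theta> P0 I lam = (1 / real k) ^ n * (real k ^ card P0 * T)"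
    using theta_idx_partition[OF cf finite_I I_ne lam ixs(1,2)]
      congruent_family_expand_fibres[OF cf lam ixs(1,2)] ixs(3) by simp
  then have "real k ^ n * theta n \<Theta> P0 I lam = real k ^ card P0 * T"
    using k_pos by (simp add: power_divide field_simps)
  moreover have "card P0 \<le> n"
    using card_idx_partition[OF ixs(1)] ixs(1,3) card_length by metis
  then have "real k ^ n = real k ^ card P0 * real k ^ (n - card P0)"
    by (simp flip: power_add)
  ultimately have "real k ^ card P0 * T = real k ^ card P0 * (real k ^ (n - card P0) * theta n \<Theta> P0 I lam)"
    by (metis mult.assoc)
  then show ?thesis unfolding T_def using k_pos by simp
qed

lemma card_div_fibre:
  assumes "0 < m" "v < c"
  shows "card {j \<in> {0..<c * m}. j div m = v} = m"
proof -
  have "{j \<in> {0..<c * m}. j div m = v} = {v * m..<v * m + m}"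
  proof (rule set_eqI)
    fix j
    have "j div m = v \<longleftrightarrow> v * m \<le> j \<and> j < v * m + m"
      using assms by (metis add.commute div_nat_eqI dividend_less_times_div mult.commute
          mult_Suc times_div_less_eq_dividend)
    moreover have "v * m + m \<le> c * m"
      using assms by (metis Suc_leI add.commute mult_Suc mult_le_mono1)
    ultimately show "j \<in> {j \<in> {0..<c * m}. j div m = v} \<longleftrightarrow> j \<in> {v * m..<v * m + m}" by auto
  qed
  then show ?thesis by simp
qed

lemma theta_interval_mult:
  assumes cf: "congruent_family n \<Theta>" and P0: "partition_on {0..<n} P0"
    and van: "lower_patterns_vanish n \<Theta> P0"
    and c: "card P0 \<le> c" "0 < c" and m: "0 < m" and lam: "lam > 0"
  shows "theta n \<Theta> P0 {0..<c * m} lam = real m ^ (n - card P0) * theta n \<Theta> P0 {0..<c} lam"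
proof -
  interpret uniform_fibration "{0..<c}" "{0..<c * m}" "\<lambda>j. j div m" m
    using c m card_div_fibre[of m _ c] by unfold_locales (auto simp: less_mult_imp_div_less)
  show ?thesis using theta_fibration_scale[OF cf P0 van _ lam] c by simp
qed

theorem lemma4p6:
  fixes n :: nat and \<Theta> :: "nat set \<Rightarrow> (nat \<Rightarrow> real) \<Rightarrow> (nat \<Rightarrow> real) list \<Rightarrow> real"
    and P0 :: "nat set set"
  assumes "congruent_family n \<Theta>"
    and "partition_on {0..<n} P0"
    and "\<forall>P. partition_on {0..<n} P \<and> refines P P0 \<and> P \<noteq> P0 \<longrightarrow>
           (\<forall>lam>0. \<forall>I. finite I \<and> I \<noteq> {} \<and> card I \<ge> card P \<longrightarrow> theta n \<Theta> P I lam = 0)"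
  shows "\<exists>f. continuous_on {0<..} f \<and>
           (\<forall>lam>0. \<forall>I. finite I \<and> I \<noteq> {} \<and> card I \<ge> card P0 \<longrightarrow>
              theta n \<Theta> P0 I lam = f lam * real (card I) ^ (n - card P0))"
proof -
  note cf = assms(1) and P0 = assms(2)
  have van: "lower_patterns_vanish n \<Theta> P0" using assms(3) unfolding lower_patterns_vanish_def .
  define m where "m = max (card P0) 1"
  define f where "f lam = theta n \<Theta> P0 {0..<m} lam / real m ^ (n - card P0)" for lam
  have m: "card P0 \<le> m" "0 < m" unfolding m_def by auto
  have "continuous_on {0<..} f"
    unfolding f_def using m by (intro continuous_on_divide continuous_on_const theta_continuous_on[OF cf P0]) auto
  moreover have "theta n \<Theta> P0 I lam = f lam * real (card I) ^ (n - card P0)"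
    if lam: "lam > 0" and I: "finite I" "I \<noteq> {}" "card P0 \<le> card I" for lam I
  proof -
    have c: "0 < card I" using I by (simp add: card_gt_0_iff)
    have "real m ^ (n - card P0) * theta n \<Theta> P0 {0..<card I} lam
        = real (card I) ^ (n - card P0) * theta n \<Theta> P0 {0..<m} lam"
      using theta_interval_mult[OF cf P0 van I(3) c m(2) lam] theta_interval_mult[OF cf P0 van m c lam]
      by (simp add: mult.commute)
    moreover have "theta n \<Theta> P0 I lam = theta n \<Theta> P0 {0..<card I} lam"
      using theta_eq_if_card_eq[OF cf P0 I(1,2) _ _ I(3) lam] by simp
    ultimately show ?thesis unfolding f_def using m by (simp add: field_simps)
  qed
  ultimately show ?thesis by blast
qed

end
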